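(* Let $\mathcal{M}\subseteq\mathbb{S}^n$. Then $\mathcal{S}(\mathcal{M})$ is rank-one generated if and only if for every nonzero $X\in\mathcal{S}(\mathcal{M})$ we have $\mathrm{range}(X)\cap\mathcal{E}(X,\mathcal{M})\neq\{0\}$.
   Context: $\mathbb{S}^n$ denotes real symmetric $n\times n$ matrices with $\langle A,B\rangle=\mathrm{tr}(AB)$, $\mathbb{S}^n_+$ the PSD cone. For $\mathcal{M}\subseteq\mathbb{S}^n$, $\mathcal{S}(\mathcal{M})=\{X\in\mathbb{S}^n_+:\langle M,X\rangle\ge0\ \forall M\in\mathcal{M}\}$, and for $X\in\mathcal{S}(\mathcal{M})$, $\mathcal{E}(X,\mathcal{M})=\{x\in\mathbb{R}^n: |x^\top Mx|\le\langle M,X\rangle\ \forall M\in\mathcal{M}\}$. A closed convex cone $\mathcal{S}\subseteq\mathbb{S}^n_+$ is rank-one generated (ROG) if $\mathcal{S}=\mathrm{conv}(\mathcal{S}\cap\{xx^\top:x\in\mathbb{R}^n\})$. *)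

theory Defs
  imports "HOL-Analysis.Analysis"
begin

text \<open>Real symmetric n x n matrices, n = CARD('n), represented as real^'n^'n.\<close>

definition sym_mat :: "real^'n^'n \<Rightarrow> bool" where
  "sym_mat A \<longleftrightarrow> transpose A = A"

definition frob :: "real^'n^'n \<Rightarrow> real^'n^'n \<Rightarrow> real" where
  "frob A B = trace (A ** B)"

definition psd :: "real^'n^'n \<Rightarrow> bool" where
  "psd X \<longleftrightarrow> sym_mat X \<and> (\<forall>x. x \<bullet> (X *v x) \<ge> 0)"

definition outer :: "real^'n \<Rightarrow> real^'n^'n" where
  "outer x = (\<chi> i j. x $ i * x $ j)"

definition SM :: "(real^'n^'n) set \<Rightarrow> (real^'n^'n) set" where
  "SM \<M> = {X. psd X \<and> (\<forall>M\<in>\<M>. frob M X \<ge> 0)}"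

definition EM :: "real^'n^'n \<Rightarrow> (real^'n^'n) set \<Rightarrow> (real^'n) set" where
  "EM X \<M> = {x. \<forall>M\<in>\<M>. \<bar>x \<bullet> (M *v x)\<bar> \<le> frob M X}"

definition ROG :: "(real^'n^'n) set \<Rightarrow> bool" where
  "ROG S \<longleftrightarrow> closed S \<and> convex_cone S \<and> S \<subseteq> Collect psd \<and>
     S = convex hull (S \<inter> {outer x | x. True})"

end

theory Submission
  imports Defs
begin

(* If X is a convex combination of rank-one matrices x x^T in S(M), then some nonzero x x^T is
   dominated by X in the order of the cone S(M).  Such an x lies in E(X,M), and it lies in the
   range of X because X - x x^T is PSD.  Conversely, the slice {X in S(M). tr X = 1} is compact
   and convex, hence the convex hull of its extreme points.  Given a nonzero x = X y in E(X,M),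
   the matrices X +- e (x x^T - |x|^2 X) stay in the slice for small e > 0, so at an extreme
   point X is a multiple of x x^T. *)

section \<open>Quadratic forms and the trace inner product\<close>

lemma inner_matrix_vector_eq_sum:
  "(v::real^'m) \<bullet> (X *v w) = (\<Sum>i\<in>UNIV. \<Sum>j\<in>UNIV. v$i * X$i$j * w$j)"
  by (simp add: inner_vec_def matrix_vector_mult_def sum_distrib_left mult.assoc)

lemma frob_eq_sum: "frob M X = (\<Sum>i\<in>UNIV. \<Sum>j\<in>UNIV. M$i$j * X$j$i)"
  by (simp add: frob_def trace_def matrix_matrix_mult_def)

lemma frob_outer: "frob M (outer x) = x \<bullet> (M *v x)"
  unfolding frob_eq_sum inner_matrix_vector_eq_sum outer_def
  by (simp add: sum_distrib_left mult.assoc mult.commute mult.left_commute)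

lemma linear_frob: "linear (frob M)"
  by (rule linearI) (simp_all add: frob_eq_sum algebra_simps sum.distrib sum_distrib_left)

lemmas frob_add = linear_add[OF linear_frob]
  and frob_diff = linear_diff[OF linear_frob]
  and frob_scaleR = linear_scale[OF linear_frob]

lemma linear_quadratic_form: "linear (\<lambda>X::real^'n^'m. v \<bullet> (X *v w))"
  by (rule linearI) (simp_all add: matrix_vector_mult_add_rdistrib inner_add_right
      scaleR_matrix_vector_assoc[symmetric])

lemma quadratic_form_outer: "v \<bullet> (outer x *v v) = (x \<bullet> v)\<^sup>2"
  unfolding inner_matrix_vector_eq_sum unfolding outer_def inner_vec_def power2_eq_square
  by (simp add: sum_product mult.assoc mult.commute mult.left_commute)

lemma trace_outer: "trace (outer x) = x \<bullet> x"
  by (simp add: trace_def outer_def inner_vec_def)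

lemma trace_scaleR: "trace (c *\<^sub>R (A::real^'n^'n)) = c * trace A"
  by (simp add: trace_def sum_distrib_left)

lemma linear_trace: "linear (trace :: real^'n^'n \<Rightarrow> real)"
  by (rule linearI) (simp_all add: trace_add trace_scaleR)

lemma outer_scaleR: "outer (c *\<^sub>R x) = c\<^sup>2 *\<^sub>R outer x"
  by (simp add: outer_def vec_eq_iff power2_eq_square)

lemma outer_0 [simp]: "outer 0 = 0"
  by (simp add: outer_def vec_eq_iff)

lemma sym_mat_inner_commute:
  assumes "sym_mat X" shows "v \<bullet> (X *v w) = w \<bullet> (X *v v)"
proof -
  have "X$i$j = X$j$i" for i j
    using assms unfolding sym_mat_def by (metis transpose_def vec_lambda_beta)
  then show ?thesis
    unfolding inner_matrix_vector_eq_sum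
    by (subst sum.swap) (simp add: mult.commute mult.left_commute)
qed

section \<open>Positive semidefinite matrices\<close>

lemma psd_add: "psd A \<Longrightarrow> psd B \<Longrightarrow> psd (A + B)"
  unfolding psd_def sym_mat_def
  by (simp add: transpose_def vec_eq_iff matrix_vector_mult_add_rdistrib inner_add_right)

lemma psd_scaleR: "psd A \<Longrightarrow> 0 \<le> c \<Longrightarrow> psd (c *\<^sub>R A)"
  unfolding psd_def sym_mat_def
  by (simp add: transpose_def vec_eq_iff scaleR_matrix_vector_assoc[symmetric])

lemma sym_mat_outer: "sym_mat (outer x)"
  by (simp add: sym_mat_def outer_def transpose_def vec_eq_iff mult.commute)

lemma psd_outer: "psd (outer x)"
  unfolding psd_def by (simp add: sym_mat_outer quadratic_form_outer)

lemma psd_0: "psd 0"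
  unfolding psd_def sym_mat_def by (simp add: transpose_def vec_eq_iff)

lemma quadratic_nonneg_imp_discriminant:
  fixes a b c :: real
  assumes "0 \<le> c" and "\<And>t. 0 \<le> a + 2 * t * b + t\<^sup>2 * c"
  shows "b\<^sup>2 \<le> a * c"
proof (cases "c = 0")
  case True
  have "b = 0"
  proof (rule ccontr)
    assume "b \<noteq> 0"
    then have "a + 2 * (- (a + 1) / (2 * b)) * b + (- (a + 1) / (2 * b))\<^sup>2 * c = -1"
      using True by (simp add: field_simps)
    then show False using assms(2) by (metis neg_0_le_iff_le not_one_le_zero)
  qed
  then show ?thesis using True by simp
next
  case False
  with assms(1) have c: "0 < c" by simp
  have "0 \<le> a + 2 * (- b / c) * b + (- b / c)\<^sup>2 * c" by (rule assms(2))
  also have "\<dots> = (a * c - b\<^sup>2) / c" using c by (simp add: field_simps power2_eq_square)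
  finally show ?thesis using c by (simp add: zero_le_divide_iff)
qed

lemma psd_cauchy_schwarz:
  assumes "psd X"
  shows "(v \<bullet> (X *v w))\<^sup>2 \<le> (v \<bullet> (X *v v)) * (w \<bullet> (X *v w))"
proof (rule quadratic_nonneg_imp_discriminant)
  show "0 \<le> w \<bullet> (X *v w)" using assms psd_def by blast
  fix t
  have "0 \<le> (v + t *\<^sub>R w) \<bullet> (X *v (v + t *\<^sub>R w))" using assms psd_def by blast
  also have "\<dots> = v \<bullet> (X *v v) + 2 * t * (v \<bullet> (X *v w)) + t\<^sup>2 * (w \<bullet> (X *v w))"
    using sym_mat_inner_commute[of X v w] assms
    by (simp add: psd_def matrix_vector_right_distrib inner_add_left inner_add_right
        matrix_vector_mult_scaleR power2_eq_square algebra_simps)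
  finally show "0 \<le> v \<bullet> (X *v v) + 2 * t * (v \<bullet> (X *v w)) + t\<^sup>2 * (w \<bullet> (X *v w))" .
qed

lemma psd_diff_outer:
  assumes "psd X" "0 \<le> e" "e * (y \<bullet> (X *v y)) \<le> 1"
  shows "psd (X - e *\<^sub>R outer (X *v y))"
  unfolding psd_def
proof (intro conjI allI)
  show "sym_mat (X - e *\<^sub>R outer (X *v y))"
    using assms(1) sym_mat_outer[of "X *v y"] unfolding psd_def sym_mat_def
    by (simp add: transpose_def vec_eq_iff)
  fix v
  have "(X *v y) \<bullet> v = y \<bullet> (X *v v)"
    using assms(1) sym_mat_inner_commute[of X v y] by (simp add: psd_def inner_commute)
  then have "e * ((X *v y) \<bullet> v)\<^sup>2 \<le> e * ((y \<bullet> (X *v y)) * (v \<bullet> (X *v v)))"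
    using psd_cauchy_schwarz[OF assms(1), of y v] assms(2) by (simp add: mult_left_mono)
  also have "\<dots> \<le> v \<bullet> (X *v v)"
    using assms(1,3) mult_right_mono[OF assms(3), of "v \<bullet> (X *v v)"]
    by (simp add: psd_def mult.assoc)
  finally show "0 \<le> v \<bullet> ((X - e *\<^sub>R outer (X *v y)) *v v)"
    by (simp add: matrix_vector_mult_diff_rdistrib inner_diff_right
        scaleR_matrix_vector_assoc[symmetric] quadratic_form_outer)
qed

lemma in_range_if_psd_diff_outer:
  assumes "psd (X - outer x)"
  shows "x \<in> range ((*v) X)"
proof -
  have "subspace (range ((*v) X))"
    by (simp add: linear_subspace_image matrix_vector_mul_linear)
  moreover have "x \<in> (range ((*v) X))\<^sup>\<bottom>\<^sup>\<bottom>"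
    unfolding orthogonal_comp_def orthogonal_def
  proof (clarsimp)
    fix k assume k: "\<forall>v. (X *v v) \<bullet> k = 0"
    have "0 \<le> k \<bullet> ((X - outer x) *v k)" using assms psd_def by blast
    also have "\<dots> = - (x \<bullet> k)\<^sup>2"
      using k[rule_format, of k]
      by (simp add: matrix_vector_mult_diff_rdistrib inner_diff_right quadratic_form_outer inner_commute)
    finally show "k \<bullet> x = 0" by (simp add: inner_commute)
  qed
  ultimately show ?thesis by (simp add: orthogonal_comp_self)
qed

lemma inner_axis_matrix_vector_axis: "axis i 1 \<bullet> (X *v axis j 1) = X$i$j"
  by (simp add: inner_commute[of "axis i 1"] inner_axis matrix_vector_mult_basis column_def)

lemma psd_diag_nonneg: "psd X \<Longrightarrow> 0 \<le> X$i$i"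
  by (metis inner_axis_matrix_vector_axis psd_def)

lemma psd_entry_square_le: "psd X \<Longrightarrow> (X$i$j)\<^sup>2 \<le> X$i$i * X$j$j"
  by (metis psd_cauchy_schwarz inner_axis_matrix_vector_axis)

lemma psd_norm_le_trace:
  assumes "psd X"
  shows "norm X \<le> trace X"
proof (rule power2_le_imp_le)
  have "(norm X)\<^sup>2 = (\<Sum>i\<in>UNIV. \<Sum>j\<in>UNIV. (X$i$j)\<^sup>2)"
    by (simp only: power2_norm_eq_inner) (simp add: inner_vec_def power2_eq_square)
  also have "\<dots> \<le> (\<Sum>i\<in>UNIV. \<Sum>j\<in>UNIV. X$i$i * X$j$j)"
    by (intro sum_mono psd_entry_square_le[OF assms])
  also have "\<dots> = (trace X)\<^sup>2"
    by (simp add: trace_def power2_eq_square sum_product)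
  finally show "(norm X)\<^sup>2 \<le> (trace X)\<^sup>2" .
  show "0 \<le> trace X"
    by (simp add: trace_def sum_nonneg psd_diag_nonneg[OF assms])
qed

lemma psd_trace_eq_0: "psd X \<Longrightarrow> trace X = 0 \<Longrightarrow> X = 0"
  using psd_norm_le_trace[of X] by simp

section \<open>The cone S(M)\<close>

lemma continuous_on_linear:
  "linear (f :: 'a::euclidean_space \<Rightarrow> 'b::real_normed_vector) \<Longrightarrow> continuous_on S f"
  by (simp add: linear_continuous_on linear_conv_bounded_linear)

lemma SM_add: "A \<in> SM \<M> \<Longrightarrow> B \<in> SM \<M> \<Longrightarrow> A + B \<in> SM \<M>"
  unfolding SM_def by (auto simp: psd_add frob_add)

lemma SM_scaleR: "A \<in> SM \<M> \<Longrightarrow> 0 \<le> c \<Longrightarrow> c *\<^sub>R A \<in> SM \<M>"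
  unfolding SM_def by (auto simp: psd_scaleR frob_scaleR)

lemma convex_cone_SM: "convex_cone (SM \<M>)"
proof -
  have "0 \<in> SM \<M>"
    unfolding SM_def by (simp add: psd_0 frob_eq_sum)
  then show ?thesis
    unfolding convex_cone_def conic_def convex_def by (auto intro: SM_add SM_scaleR)
qed

lemma closed_SM: "closed (SM \<M>)"
proof -
  have "SM \<M> = (\<Inter>i. \<Inter>j. {X. X$i$j = X$j$i}) \<inter> (\<Inter>v. {X. 0 \<le> v \<bullet> (X *v v)})
     \<inter> (\<Inter>M\<in>\<M>. {X. 0 \<le> frob M X})"
    unfolding SM_def psd_def sym_mat_def by (auto simp: vec_eq_iff transpose_def)
  moreover have "closed \<dots>"
    by (intro closed_Int closed_INT ballI closed_Collect_eq closed_Collect_le continuous_intros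
        continuous_on_linear linear_frob linear_quadratic_form)
  ultimately show ?thesis by simp
qed

lemma compact_SM_trace_1:
  fixes \<M> :: "(real^'n^'n) set"
  shows "compact (SM \<M> \<inter> {X. trace X = 1})"
proof -
  have "closed {X :: real^'n^'n. trace X = 1}"
    by (intro closed_Collect_eq continuous_on_const continuous_on_linear linear_trace)
  moreover have "bounded (SM \<M> \<inter> {X. trace X = 1})"
    unfolding bounded_iff by (intro exI[of _ 1]) (auto simp: SM_def dest: psd_norm_le_trace)
  ultimately show ?thesis
    by (simp add: compact_eq_bounded_closed closed_SM closed_Int bounded_Int)
qed

section \<open>Convex cones and extreme points\<close>

lemma convex_cone_sum:
  assumes "convex_cone S" "\<And>i. i \<in> I \<Longrightarrow> 0 \<le> c i" "\<And>i. i \<in> I \<Longrightarrow> v i \<in> S"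
  shows "(\<Sum>i\<in>I. c i *\<^sub>R v i) \<in> S"
  using assms(2,3)
proof (induction I rule: infinite_finite_induct)
  case (insert i I)
  then show ?case by (simp add: convex_cone_add convex_cone_scaleR assms(1))
qed (simp_all add: convex_cone_contains_0 assms(1))

lemma convex_hull_dominates_generator:
  assumes "convex_cone S" "X \<in> convex hull (S \<inter> A)" "X \<noteq> 0"
  obtains c a where "0 < c" "a \<in> S \<inter> A" "a \<noteq> 0" "X - c *\<^sub>R a \<in> S"
proof -
  obtain T u where T: "finite T" "T \<subseteq> S \<inter> A" "\<forall>v\<in>T. 0 \<le> u v" "(\<Sum>v\<in>T. u v *\<^sub>R v) = X"
    using assms(2) unfolding convex_hull_explicit by blast
  obtain a where a: "a \<in> T" "u a *\<^sub>R a \<noteq> 0"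
    using T(4) assms(3) sum.neutral[of T "\<lambda>v. u v *\<^sub>R v"] by blast
  have "X - u a *\<^sub>R a = (\<Sum>v\<in>T - {a}. u v *\<^sub>R v)"
    using T(1,4) a(1) by (simp add: sum_diff1)
  also have "\<dots> \<in> S"
    using T(2,3) by (intro convex_cone_sum assms(1)) auto
  finally show ?thesis
    using that[of "u a" a] a T(2,3) by force
qed

lemma conic_convex_hull: "conic S \<Longrightarrow> conic (convex hull S)"
  unfolding conic_def
  by (metis (no_types, lifting) convex_hull_scaling hull_mono image_eqI image_subsetI subsetD)

lemma extreme_point_plus_minus_eq_0:
  assumes "X extreme_point_of S" "X + D \<in> S" "X - D \<in> S"
  shows "D = 0"
proof (rule ccontr)
  assume "D \<noteq> 0"
  then have "X \<in> open_segment (X + D) (X - D)"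
    using midpoint_in_open_segment[of "X + D" "X - D"]
    by (simp add: midpoint_def scaleR_2[symmetric] algebra_simps)
  then show False
    using assms unfolding extreme_point_of_def by blast
qed

section \<open>Rank-one generation\<close>

lemma EM_if_outer_le:
  assumes "outer x \<in> SM \<M>" "X - outer x \<in> SM \<M>"
  shows "x \<in> EM X \<M>"
  unfolding EM_def
proof (intro CollectI ballI)
  fix M assume "M \<in> \<M>"
  then have "0 \<le> frob M (outer x)" "0 \<le> frob M (X - outer x)"
    using assms unfolding SM_def by blast+
  then show "\<bar>x \<bullet> (M *v x)\<bar> \<le> frob M X"
    by (simp add: frob_outer frob_diff)
qed

lemma range_EM_if_ROG:
  assumes "ROG (SM \<M>)" "X \<in> SM \<M>" "X \<noteq> 0"
  shows "range (\<lambda>y. X *v y) \<inter> EM X \<M> \<noteq> {0}"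
proof -
  have "X \<in> convex hull (SM \<M> \<inter> {outer x | x. True})"
    using assms(1,2) unfolding ROG_def by blast
  then obtain c z where c: "0 < c" and z: "outer z \<in> SM \<M>" "outer z \<noteq> 0"
    and rest: "X - c *\<^sub>R outer z \<in> SM \<M>"
    using convex_hull_dominates_generator[OF convex_cone_SM _ assms(3)] by blast
  define x where "x = sqrt c *\<^sub>R z"
  have x: "outer x = c *\<^sub>R outer z"
    using c by (simp add: x_def outer_scaleR)
  have "x \<noteq> 0"
    using x c z(2) by auto
  moreover have "x \<in> EM X \<M>"
    using x c z(1) rest by (intro EM_if_outer_le) (simp_all add: SM_scaleR)
  moreover have "x \<in> range (\<lambda>y. X *v y)"
    using x rest by (intro in_range_if_psd_diff_outer) (simp add: SM_def)
  ultimately show ?thesis by blast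
qed

lemma SM_plus_minus:
  assumes "X \<in> SM \<M>" "psd (X + D)" "psd (X - D)" "\<And>M. M \<in> \<M> \<Longrightarrow> \<bar>frob M D\<bar> \<le> frob M X"
  shows "X + D \<in> SM \<M>" "X - D \<in> SM \<M>"
proof -
  have "0 \<le> frob M (X + D) \<and> 0 \<le> frob M (X - D)" if "M \<in> \<M>" for M
    using assms(4)[OF that] by (simp add: frob_add frob_diff abs_le_iff)
  then show "X + D \<in> SM \<M>" "X - D \<in> SM \<M>"
    using assms(2,3) by (simp_all add: SM_def)
qed

lemma SM_rank_one_perturbation:
  assumes X: "X \<in> SM \<M>" and x: "x = X *v y" "x \<in> EM X \<M>"
  obtains e where "0 < e"
    "X + e *\<^sub>R (outer x - (x \<bullet> x) *\<^sub>R X) \<in> SM \<M>" "X - e *\<^sub>R (outer x - (x \<bullet> x) *\<^sub>R X) \<in> SM \<M>"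
proof -
  define a where "a = y \<bullet> (X *v y)"
  define q where "q = x \<bullet> x"
  define e where "e = 1 / ((a + 1) * (q + 1))"
  have psdX: "psd X" using X by (simp add: SM_def)
  have "0 \<le> a" "0 \<le> q" using psdX by (simp_all add: a_def q_def psd_def)
  then have "0 < (a + 1) * (q + 1)" "a \<le> (a + 1) * (q + 1)" "q + 1 \<le> (a + 1) * (q + 1)"
    by (simp_all add: algebra_simps add_pos_nonneg)
  then have e: "0 < e" "e * a \<le> 1" "e * (q + 1) \<le> 1"
    using \<open>0 \<le> a\<close> by (simp_all add: e_def divide_le_eq)
  define D where "D = e *\<^sub>R (outer x - q *\<^sub>R X)"
  have "psd ((1 - e * q) *\<^sub>R X + e *\<^sub>R outer x)"
    using e \<open>0 \<le> q\<close> by (intro psd_add psd_scaleR psdX psd_outer) (simp_all add: algebra_simps)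
  moreover have "psd ((e * q) *\<^sub>R X + (X - e *\<^sub>R outer x))"
    using e \<open>0 \<le> q\<close> x(1) by (intro psd_add psd_scaleR psdX) (simp_all add: psd_diff_outer psdX a_def)
  moreover have "\<bar>frob M D\<bar> \<le> frob M X" if "M \<in> \<M>" for M
  proof -
    have fX: "0 \<le> frob M X" and fx: "\<bar>frob M (outer x)\<bar> \<le> frob M X"
      using X x(2) that by (simp_all add: SM_def EM_def frob_outer)
    have "\<bar>frob M (outer x) - q * frob M X\<bar> \<le> (q + 1) * frob M X"
      using fx mult_nonneg_nonneg[OF \<open>0 \<le> q\<close> fX] by (auto simp: abs_le_iff algebra_simps)
    then have "e * \<bar>frob M (outer x) - q * frob M X\<bar> \<le> (e * (q + 1)) * frob M X"
      using e(1) by (simp add: mult_left_mono mult.assoc)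
    also have "\<dots> \<le> frob M X"
      using mult_right_mono[OF e(3) fX] by simp
    finally show ?thesis
      using e(1) by (simp add: D_def frob_diff frob_scaleR abs_mult)
  qed
  ultimately have "X + D \<in> SM \<M>" "X - D \<in> SM \<M>"
    by (intro SM_plus_minus X; simp add: D_def algebra_simps)+
  then show ?thesis
    using that e(1) by (simp add: D_def q_def)
qed

lemma outer_if_extreme_point_SM_trace_1:
  assumes range_EM: "\<forall>X\<in>SM \<M>. X \<noteq> 0 \<longrightarrow> range (\<lambda>y. X *v y) \<inter> EM X \<M> \<noteq> {0}"
    and extreme: "X extreme_point_of (SM \<M> \<inter> {X. trace X = 1})"
  shows "X \<in> SM \<M> \<inter> {outer x | x. True}"
proof -
  have X: "X \<in> SM \<M>" "trace X = 1"
    using extreme by (simp_all add: extreme_point_of_def)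
  then have "X \<noteq> 0"
    by (auto simp: trace_def)
  moreover have "0 \<in> range (\<lambda>y. X *v y) \<inter> EM X \<M>"
    using X(1) by (auto simp: EM_def SM_def intro: range_eqI[of _ _ 0])
  ultimately obtain y where x: "X *v y \<in> EM X \<M>" "X *v y \<noteq> 0"
    using range_EM X(1) by blast
  define x where "x = X *v y"
  define q where "q = x \<bullet> x"
  obtain e where "0 < e" and perturbed:
    "X + e *\<^sub>R (outer x - q *\<^sub>R X) \<in> SM \<M>" "X - e *\<^sub>R (outer x - q *\<^sub>R X) \<in> SM \<M>"
    using SM_rank_one_perturbation[OF X(1) x_def] x(1) by (auto simp: x_def q_def)
  have "trace (e *\<^sub>R (outer x - q *\<^sub>R X)) = 0"
    by (simp add: trace_scaleR trace_sub trace_outer X(2) q_def)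
  then have "e *\<^sub>R (outer x - q *\<^sub>R X) = 0"
    using perturbed X(2) by (intro extreme_point_plus_minus_eq_0[OF extreme]) (simp_all add: trace_add trace_sub)
  then have "outer x = q *\<^sub>R X"
    using \<open>0 < e\<close> by simp
  moreover have "0 < q"
    using x(2) by (simp add: q_def x_def)
  ultimately have "X = outer ((1 / sqrt q) *\<^sub>R x)"
    by (simp add: outer_scaleR power_divide)
  then show ?thesis
    using X(1) by blast
qed

lemma conic_SM_Int_outer:
  fixes \<M> :: "(real^'n^'n) set"
  shows "conic (SM \<M> \<inter> {outer x | x. True})"
  unfolding conic_def
proof (clarsimp)
  fix x and c :: real
  assume "outer x \<in> SM \<M>" "0 \<le> c"
  moreover have "c *\<^sub>R outer x = outer (sqrt c *\<^sub>R x)"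
    using \<open>0 \<le> c\<close> by (simp add: outer_scaleR)
  ultimately show "c *\<^sub>R outer x \<in> SM \<M> \<and> (\<exists>z. c *\<^sub>R outer x = outer z)"
    using SM_scaleR by metis
qed

lemma ROG_if_range_EM:
  assumes range_EM: "\<forall>X\<in>SM \<M>. X \<noteq> 0 \<longrightarrow> range (\<lambda>y. X *v y) \<inter> EM X \<M> \<noteq> {0}"
  shows "ROG (SM \<M>)"
proof -
  let ?R = "SM \<M> \<inter> {outer x | x. True}"
  let ?B = "SM \<M> \<inter> {X. trace X = 1}"
  have "convex ?B"
    using convex_cone_SM[of \<M>] unfolding convex_cone_def
    by (intro convex_Int) (auto simp: convex_def trace_add trace_scaleR)
  then have "?B = convex hull {X. X extreme_point_of ?B}"
    by (intro Krein_Milman_Minkowski compact_SM_trace_1)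
  also have "\<dots> \<subseteq> convex hull ?R"
    using outer_if_extreme_point_SM_trace_1[OF range_EM] by (intro hull_mono) blast
  finally have B: "?B \<subseteq> convex hull ?R" .
  have "X \<in> convex hull ?R" if X: "X \<in> SM \<M>" for X
  proof (cases "trace X = 0")
    case True
    then have "X \<in> ?R"
      using X by (auto simp: SM_def psd_trace_eq_0 intro: exI[of _ 0])
    then show ?thesis by (rule hull_inc)
  next
    case False
    moreover have "norm X \<le> trace X"
      using X by (simp add: SM_def psd_norm_le_trace)
    ultimately have "0 < trace X"
      using norm_ge_zero[of X] by linarith
    then have "(1 / trace X) *\<^sub>R X \<in> ?B"
      using X by (simp add: SM_scaleR trace_scaleR)
    then have "(1 / trace X) *\<^sub>R X \<in> convex hull ?R"
      using B by blast
    then have "trace X *\<^sub>R ((1 / trace X) *\<^sub>R X) \<in> convex hull ?R"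
      using \<open>0 < trace X\<close> conic_convex_hull[OF conic_SM_Int_outer] by (metis conicD less_imp_le)
    then show ?thesis
      using \<open>0 < trace X\<close> by simp
  qed
  moreover have "convex hull ?R \<subseteq> SM \<M>"
    using convex_cone_SM[of \<M>] by (intro hull_minimal) (auto simp: convex_cone_def)
  ultimately show ?thesis
    unfolding ROG_def using closed_SM convex_cone_SM by (auto simp: SM_def)
qed

theorem lemma2p23:
  fixes \<M> :: "(real^'n^'n) set"
  assumes "\<forall>M\<in>\<M>. sym_mat M"
  shows "ROG (SM \<M>) \<longleftrightarrow>
    (\<forall>X\<in>SM \<M>. X \<noteq> 0 \<longrightarrow> range (\<lambda>y. X *v y) \<inter> EM X \<M> \<noteq> {0})"
  using range_EM_if_ROG ROG_if_range_EM by blast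

end
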